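(* Let $n\geq 2$. The polynomial identity $Q_n(x,y,z,t)=Q_n(x+nz+nt,y,-t,-z)$ holds if and only if, for all $0\le k\le n-1$, $$Q_{n,k}(x,t)=(x-k+t+1)\,Q_{n-1,k}(x+t+1,t)+(n+k-2)\,Q_{n-1,k-1}(x+t+1,t).$$
   Context: Define polynomials $Q_m(x,y,z,t)$ by $Q_1=1$ and $Q_{m+1}=[x+mz+(y+t)(m+y\partial_y)]Q_m$ for $m\ge1$ ($\partial_y$ the partial derivative in $y$), and define $Q_{m,k}(x,t)$ by $Q_m(x,y,1,t)=\sum_{k=0}^{m-1}Q_{m,k}(x,t)y^k$, with the convention $Q_{m,k}=0$ if $k<0$ or $k\geq m$. *)

theory Defs
  imports Complex_Main "HOL-Library.Function_Algebras" "HOL-Computational_Algebra.Polynomial"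
begin

text \<open>Q_m(x,y,z,t) is represented as a univariate polynomial in y whose coefficients
  are (polynomial) functions of the triple (x,z,t), with pointwise ring operations.\<close>

type_synonym coef = "real \<times> real \<times> real \<Rightarrow> real"

definition cx :: coef where "cx = (\<lambda>(x,z,t). x)"
definition cz :: coef where "cz = (\<lambda>(x,z,t). z)"
definition ct :: coef where "ct = (\<lambda>(x,z,t). t)"

text \<open>The operator y d/dy on polynomials in y (formal derivative, then multiplication by y);
  written out monomial-wise since pderiv needs a ring without zero divisors.\<close>
definition ydy :: "coef poly \<Rightarrow> coef poly" where
  "ydy p = (\<Sum>k\<le>degree p. monom (of_nat k * coeff p k) k)"

definition Qstep :: "nat \<Rightarrow> coef poly \<Rightarrow> coef poly" where
  "Qstep m p = smult (cx + of_nat m * cz) p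
     + [:ct, 1:] * (smult (of_nat m) p + ydy p)"

fun Q :: "nat \<Rightarrow> coef poly" where
  "Q 0 = 1"  (* unused; Q is indexed from 1 *)
| "Q (Suc 0) = 1"
| "Q (Suc (Suc m)) = Qstep (Suc m) (Q (Suc m))"

definition Qc :: "nat \<Rightarrow> int \<Rightarrow> real \<Rightarrow> real \<Rightarrow> real" where
  "Qc m k x t = (if k < 0 \<or> k \<ge> int m then 0 else coeff (Q m) (nat k) (x, 1, t))"

definition subst_n :: "nat \<Rightarrow> coef poly \<Rightarrow> coef poly" where
  "subst_n n p = map_poly (\<lambda>f. (\<lambda>(x,z,t). f (x + real n * z + real n * t, -t, -z))) p"

end

theory Submission
  imports Defs
begin

text \<open>Both sides of the equivalence hold for every \<open>n \<ge> 1\<close>. Write \<open>q(m,k)(x,z,t)\<close> for the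
  coefficient of \<open>y^k\<close> in \<open>Q_m\<close>. The defining recursion reads
  \<open>q(m+1,k) = (x + mz + (m+k)t) q(m,k) + (m+k-1) q(m,k-1)\<close>. Peeling off the innermost
  instead of the outermost operator gives a second recursion
  \<open>q(m+1,k)(x,z,t) = (x+z+t-kz) q(m,k)(x+z+t,z,t) + (m+k-1) q(m,k-1)(x+z+t,z,t)\<close>,
  proved by induction by expanding both sides once more with the first recursion;
  at \<open>z = 1\<close> it is the recursion of the theorem. Applying the first recursion to the
  substituted coefficient, then the induction hypothesis, then the second recursion shows
  \<open>q(m,k)(x + m(z+t), -t, -z) = q(m,k)(x,z,t)\<close>, which is the symmetry.\<close>

lemma coeff_ydy: "coeff (ydy p) k = of_nat k * coeff p k"
proof (cases "k \<le> degree p")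
  case True
  then show ?thesis by (simp add: ydy_def coeff_sum coeff_monom)
next
  case False
  then show ?thesis by (simp add: ydy_def coeff_sum coeff_monom coeff_eq_0)
qed

lemma coeff_Qstep:
  "coeff (Qstep m p) k (x, z, t) =
     (x + real m * z + (real m + real k) * t) * coeff p k (x, z, t)
     + (if k = 0 then 0 else (real m + real k - 1) * coeff p (k - 1) (x, z, t))"
proof -
  have "[:ct, 1:] * r = smult ct r + pCons 0 r" for r :: "coef poly"
    by (simp add: mult_pCons_left)
  then show ?thesis
    unfolding Qstep_def
    by (cases k) (auto simp: coeff_ydy cx_def cz_def ct_def algebra_simps)
qed

text \<open>Coefficients of \<open>Q\<^sub>m\<close> indexed by integers, so that \<open>k - 1\<close> needs no case split.\<close>
definition Qcoeff :: "nat \<Rightarrow> int \<Rightarrow> real \<Rightarrow> real \<Rightarrow> real \<Rightarrow> real" where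
  "Qcoeff m k x z t = (if k < 0 then 0 else coeff (Q m) (nat k) (x, z, t))"

lemma Qcoeff_neg [simp]: "k < 0 \<Longrightarrow> Qcoeff m k x z t = 0"
  by (simp add: Qcoeff_def)

lemma Qcoeff_1 [simp]: "Qcoeff (Suc 0) k x z t = (if k = 0 then 1 else 0)"
  by (auto simp: Qcoeff_def nat_eq_iff)

lemma Qcoeff_Suc:
  assumes "m \<ge> 1"
  shows "Qcoeff (Suc m) k x z t =
    (x + real m * z + (real m + of_int k) * t) * Qcoeff m k x z t
    + (real m + of_int k - 1) * Qcoeff m (k - 1) x z t"
proof -
  obtain m' where m: "m = Suc m'" using assms by (cases m) auto
  show ?thesis
  proof (cases "k < 0")
    case False
    then show ?thesis
      unfolding Qcoeff_def m
      by (cases "k = 0") (simp_all add: coeff_Qstep nat_diff_distrib)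
  qed simp
qed

lemma Qcoeff_ge_degree:
  "m \<ge> 1 \<Longrightarrow> k \<ge> int m \<Longrightarrow> Qcoeff m k x z t = 0"
proof (induction m arbitrary: k rule: nat_induct_at_least)
  case (Suc m)
  then show ?case by (simp add: Qcoeff_Suc)
qed simp

lemma Qc_eq_Qcoeff: "m \<ge> 1 \<Longrightarrow> Qc m k x t = Qcoeff m k x 1 t"
  using Qcoeff_ge_degree[of m k x 1 t] by (auto simp: Qc_def Qcoeff_def)

lemma Qcoeff_Suc_inner:
  assumes "m \<ge> 1"
  shows "Qcoeff (Suc m) k x z t =
    (x + z + t - of_int k * z) * Qcoeff m k (x + z + t) z t
    + (real m + of_int k - 1) * Qcoeff m (k - 1) (x + z + t) z t"
  using assms
proof (induction m arbitrary: k x rule: nat_induct_at_least)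
  case base
  then show ?case by (simp add: Qcoeff_Suc algebra_simps)
next
  case (Suc m)
  define w where "w = x + z + t"
  have "Qcoeff (Suc (Suc m)) k x z t =
    (x + real (Suc m) * z + (real (Suc m) + of_int k) * t) * Qcoeff (Suc m) k x z t
    + (real (Suc m) + of_int k - 1) * Qcoeff (Suc m) (k - 1) x z t"
    by (rule Qcoeff_Suc) simp
  also have "\<dots> =
    (x + real (Suc m) * z + (real (Suc m) + of_int k) * t)
      * ((w - of_int k * z) * Qcoeff m k w z t
         + (real m + of_int k - 1) * Qcoeff m (k - 1) w z t)
    + (real (Suc m) + of_int k - 1)
      * ((w - of_int (k - 1) * z) * Qcoeff m (k - 1) w z t
         + (real m + of_int (k - 1) - 1) * Qcoeff m (k - 1 - 1) w z t)"
    by (simp only: Suc.IH w_def)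
  also have "\<dots> =
    (w - of_int k * z)
      * ((w + real m * z + (real m + of_int k) * t) * Qcoeff m k w z t
         + (real m + of_int k - 1) * Qcoeff m (k - 1) w z t)
    + (real (Suc m) + of_int k - 1)
      * ((w + real m * z + (real m + of_int (k - 1)) * t) * Qcoeff m (k - 1) w z t
         + (real m + of_int (k - 1) - 1) * Qcoeff m (k - 1 - 1) w z t)"
    by (simp add: w_def algebra_simps)
  also have "\<dots> =
    (w - of_int k * z) * Qcoeff (Suc m) k w z t
    + (real (Suc m) + of_int k - 1) * Qcoeff (Suc m) (k - 1) w z t"
    using Suc by (simp add: Qcoeff_Suc)
  finally show ?case by (simp add: w_def)
qed

lemma Qcoeff_symmetric:
  "m \<ge> 1 \<Longrightarrow> Qcoeff m k (x + real m * (z + t)) (- t) (- z) = Qcoeff m k x z t"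
proof (induction m arbitrary: k x rule: nat_induct_at_least)
  case (Suc m)
  have shift: "x + real (Suc m) * (z + t) = (x + z + t) + real m * (z + t)"
    by (simp add: algebra_simps)
  have "Qcoeff (Suc m) k (x + real (Suc m) * (z + t)) (- t) (- z) =
    (x + real (Suc m) * (z + t) - real m * t - (real m + of_int k) * z)
      * Qcoeff m k (x + z + t) z t
    + (real m + of_int k - 1) * Qcoeff m (k - 1) (x + z + t) z t"
    using Suc by (simp only: Qcoeff_Suc shift) (simp add: algebra_simps)
  also have "\<dots> = Qcoeff (Suc m) k x z t"
    using Suc by (simp add: Qcoeff_Suc_inner algebra_simps)
  finally show ?case .
qed simp

lemma Q_symmetric: "m \<ge> 1 \<Longrightarrow> Q m = subst_n m (Q m)"
proof (rule poly_eqI)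
  fix k assume "m \<ge> 1"
  have "coeff (Q m) k (x, z, t) = coeff (Q m) k (x + real m * z + real m * t, - t, - z)"
    for x z t
    using Qcoeff_symmetric[OF \<open>m \<ge> 1\<close>, of "int k" x z t]
    by (simp add: Qcoeff_def distrib_left add.assoc)
  then show "coeff (Q m) k = coeff (subst_n m (Q m)) k"
    by (auto simp: subst_n_def coeff_map_poly fun_eq_iff zero_fun_def)
qed

theorem lemma6p1:
  fixes n :: nat
  assumes "n \<ge> 2"
  shows "Q n = subst_n n (Q n) \<longleftrightarrow>
    (\<forall>k::int. 0 \<le> k \<and> k \<le> int n - 1 \<longrightarrow>
      (\<forall>x t::real. Qc n k x t =
          (x - real_of_int k + t + 1) * Qc (n - 1) k (x + t + 1) t
          + (real n + real_of_int k - 2) * Qc (n - 1) (k - 1) (x + t + 1) t))"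
proof -
  obtain m where n: "n = Suc m" and "m \<ge> 1"
    using assms by (cases n) auto
  have "Q n = subst_n n (Q n)"
    using assms by (intro Q_symmetric) simp
  moreover have "Qc n k x t =
      (x - real_of_int k + t + 1) * Qc (n - 1) k (x + t + 1) t
      + (real n + real_of_int k - 2) * Qc (n - 1) (k - 1) (x + t + 1) t" for k x t
    using Qcoeff_Suc_inner[OF \<open>m \<ge> 1\<close>, of k x 1 t] \<open>m \<ge> 1\<close>
    by (simp add: n Qc_eq_Qcoeff algebra_simps)
  ultimately show ?thesis by blast
qed

end
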